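(* Let $(G,\tau,\partial)$ be a Polish topometric group with the Steinhaus property. Then for any Polish topology $\tau'$ on $G$ such that $(G,\tau',\partial)$ is also a (Polish) topometric group, we have $\tau=\tau'$.
   Context: A topometric group is a triple $(G,\tau,\partial)$ with $(G,\tau)$ a topological group, $\partial$ a bi-invariant metric whose topology refines $\tau$ and which is $\tau$-lower semi-continuous ($\{(x,y)\colon\partial(x,y)\le r\}$ is $\tau$-closed for all $r$); it is Polish if $\tau$ is Polish. For $A\subseteq G$, $(A)_\varepsilon=\{g\colon\partial(g,A)<\varepsilon\}$. $A\subseteq G$ is $\sigma$-syndetic if $G$ is covered by countably many left translates of $A$. $(G,\tau,\partial)$ has the Steinhaus property if there is an integer $k$ such that for every symmetric $\sigma$-syndetic $A\subseteq G$ and every $\varepsilon>0$, $1_G\in\mathrm{Int}_\tau\big((A^k)_\varepsilon\big)$. *)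

theory Defs
  imports "HOL-Analysis.Analysis"
begin

text \<open>The group G is the carrier type 'a with a (not necessarily commutative)
group structure from the class group_add; the group operation is written +,
the identity 0 and inversion uminus.\<close>

definition polish_topology :: "'a topology \<Rightarrow> bool" where
  "polish_topology T \<longleftrightarrow> completely_metrizable_space T \<and> separable_space T"

definition topological_group :: "('a::group_add) topology \<Rightarrow> bool" where
  "topological_group T \<longleftrightarrow> topspace T = UNIV
     \<and> continuous_map (prod_topology T T) T (\<lambda>(x, y). x + y)
     \<and> continuous_map T T uminus"

definition topometric_group :: "('a::group_add) topology \<Rightarrow> ('a \<Rightarrow> 'a \<Rightarrow> real) \<Rightarrow> bool" where
  "topometric_group T d \<longleftrightarrow>
     topological_group T
     \<and> Metric_space UNIV d
     \<and> (\<forall>g x y. d (g + x) (g + y) = d x y \<and> d (x + g) (y + g) = d x y)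
     \<and> (\<forall>U. openin T U \<longrightarrow> openin (Metric_space.mtopology UNIV d) U)
     \<and> (\<forall>r. closedin (prod_topology T T) {(x, y). d x y \<le> r})"

definition polish_topometric_group :: "('a::group_add) topology \<Rightarrow> ('a \<Rightarrow> 'a \<Rightarrow> real) \<Rightarrow> bool" where
  "polish_topometric_group T d \<longleftrightarrow> topometric_group T d \<and> polish_topology T"

definition metric_nbhd :: "('a \<Rightarrow> 'a \<Rightarrow> real) \<Rightarrow> 'a set \<Rightarrow> real \<Rightarrow> 'a set" where
  "metric_nbhd d A e = {g. (INF a\<in>A. ereal (d g a)) < ereal e}"

fun set_power :: "('a::group_add) set \<Rightarrow> nat \<Rightarrow> 'a set" where
  "set_power A 0 = {0}"
| "set_power A (Suc k) = {a + b | a b. a \<in> A \<and> b \<in> set_power A k}"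

definition sigma_syndetic :: "('a::group_add) set \<Rightarrow> bool" where
  "sigma_syndetic A \<longleftrightarrow> (\<exists>C. countable C \<and> (\<Union>c\<in>C. (\<lambda>a. c + a) ` A) = UNIV)"

definition symmetric_set :: "('a::group_add) set \<Rightarrow> bool" where
  "symmetric_set A \<longleftrightarrow> uminus ` A = A"

definition steinhaus_property :: "('a::group_add) topology \<Rightarrow> ('a \<Rightarrow> 'a \<Rightarrow> real) \<Rightarrow> bool" where
  "steinhaus_property T d \<longleftrightarrow>
     (\<exists>k::nat. k \<ge> 1 \<and> (\<forall>A e. symmetric_set A \<and> sigma_syndetic A \<and> e > 0 \<longrightarrow>
        0 \<in> T interior_of (metric_nbhd d (set_power A k) e)))"

end

theory Submission
  imports Defs
begin

text \<open>
  First, T' is coarser than T: given a T'-neighbourhood V of 0, pick a symmetric T'-open W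
  with W^(k+1) \<subseteq> V. Separability of T' makes W \<sigma>-syndetic, and the metric
  \<epsilon>-neighbourhood of W^k stays inside W^(k+1) once the \<epsilon>-ball at 0 lies in W,
  so the Steinhaus property makes V a T-neighbourhood of 0.

  Second, a Polish group topology T' coarser than a Polish group topology T equals it.
  For T-open A, the Baire category theorem in T' (applied to countably many translates) gives
  A \<subseteq> int cl A, with interior and closure taken in T'. A Lusin--Souslin scheme of nested
  T-balls shows that A is T'-comeagre in int cl A, and Pettis' argument then yields
  int cl A \<subseteq> {a - b | a b. a \<in> A \<and> b \<in> A}. Hence T-neighbourhoods of 0 are T'-neighbourhoods of 0.
\<close>

lemma topological_group_topspace: "topological_group X \<Longrightarrow> topspace X = UNIV"
  by (simp add: topological_group_def)

lemma continuous_map_group_add: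
  "topological_group X \<Longrightarrow> continuous_map (prod_topology X X) X (\<lambda>(x, y). x + y)"
  by (simp add: topological_group_def)

lemma continuous_map_group_uminus: "topological_group X \<Longrightarrow> continuous_map X X uminus"
  by (simp add: topological_group_def)

lemma continuous_map_group_diff:
  assumes "topological_group X"
  shows "continuous_map (prod_topology X X) X (\<lambda>(x, y). - x + y)"
proof -
  have "continuous_map (prod_topology X X) (prod_topology X X) (\<lambda>p. (- fst p, snd p))"
    by (intro continuous_map_pairedI continuous_map_compose[OF continuous_map_fst
          continuous_map_group_uminus[OF assms], unfolded o_def] continuous_map_snd)
  from continuous_map_compose[OF this continuous_map_group_add[OF assms]] show ?thesis
    unfolding case_prod_unfold by (simp add: o_def)
qed

lemma continuous_map_add_left:
  assumes "topological_group X" shows "continuous_map X X (\<lambda>y. a + y)"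
proof -
  have "continuous_map X (prod_topology X X) (\<lambda>y. (a, y))"
    by (intro continuous_map_pairedI) (auto simp: topological_group_topspace[OF assms])
  from continuous_map_compose[OF this continuous_map_group_add[OF assms]] show ?thesis
    by (simp add: o_def)
qed

lemma continuous_map_add_right:
  assumes "topological_group X" shows "continuous_map X X (\<lambda>y. y + a)"
proof -
  have "continuous_map X (prod_topology X X) (\<lambda>y. (y, a))"
    by (intro continuous_map_pairedI) (auto simp: topological_group_topspace[OF assms])
  from continuous_map_compose[OF this continuous_map_group_add[OF assms]] show ?thesis
    by (simp add: o_def)
qed

lemma openin_group_preimage:
  assumes "topological_group X" "continuous_map X X f" "openin X U"
  shows "openin X {x. f x \<in> U}"
  using openin_continuous_map_preimage[OF assms(2,3)]
  by (simp add: topological_group_topspace[OF assms(1)])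

lemma homeomorphic_map_add_left:
  assumes "topological_group X" shows "homeomorphic_map X X (\<lambda>y. a + y)"
proof -
  have "homeomorphic_maps X X (\<lambda>y. a + y) (\<lambda>y. - a + y)"
    unfolding homeomorphic_maps_def
    using continuous_map_add_left[OF assms] by (auto simp: add.assoc[symmetric])
  then show ?thesis
    using homeomorphic_map_maps by blast
qed

lemma openin_translate_left:
  assumes "topological_group X" "openin X U" shows "openin X ((\<lambda>y. a + y) ` U)"
  using homeomorphic_map_openness_eq[OF homeomorphic_map_add_left[OF assms(1)]] assms(2) by blast

lemma closure_of_translate_left:
  assumes "topological_group X"
  shows "X closure_of ((\<lambda>y. a + y) ` S) = (\<lambda>y. a + y) ` (X closure_of S)"
  using homeomorphic_map_closure_of[OF homeomorphic_map_add_left[OF assms]]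
  by (simp add: topological_group_topspace[OF assms])

lemma interior_of_translate_left:
  assumes "topological_group X"
  shows "X interior_of ((\<lambda>y. a + y) ` S) = (\<lambda>y. a + y) ` (X interior_of S)"
  using homeomorphic_map_interior_of[OF homeomorphic_map_add_left[OF assms]]
  by (simp add: topological_group_topspace[OF assms])

lemma translate_left_cancel: "(\<lambda>y. a + y) ` (\<lambda>y. - a + y) ` S = (S :: 'a::group_add set)"
  by (simp add: image_image add.assoc[symmetric])

lemma set_power_mono: "A \<subseteq> B \<Longrightarrow> set_power A m \<subseteq> set_power B m"
  by (induction m) auto

lemma symmetric_set_uminus: "symmetric_set A \<Longrightarrow> x \<in> A \<Longrightarrow> - x \<in> A"
  unfolding symmetric_set_def by blast

lemma add_in_set_power_2: "x \<in> A \<Longrightarrow> y \<in> A \<Longrightarrow> x + y \<in> set_power A 2"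
  by (auto simp: numeral_2_eq_2)

lemma zero_nhds_split:
  assumes "topological_group X" "openin X V" "0 \<in> V"
  obtains W1 W2 where "openin X W1" "openin X W2" "0 \<in> W1" "0 \<in> W2"
    "\<And>x y. x \<in> W1 \<Longrightarrow> y \<in> W2 \<Longrightarrow> x + y \<in> V"
proof -
  define S where "S = {p \<in> topspace (prod_topology X X). (\<lambda>(x, y). x + y) p \<in> V}"
  have "openin (prod_topology X X) S"
    unfolding S_def using openin_continuous_map_preimage[OF continuous_map_group_add] assms by blast
  moreover have "(0, 0) \<in> S"
    using assms by (simp add: S_def topological_group_topspace)
  ultimately obtain W1 W2 where "openin X W1" "openin X W2" "0 \<in> W1" "0 \<in> W2" "W1 \<times> W2 \<subseteq> S"
    by (metis openin_prod_topology_alt)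
  then show thesis
    by (intro that[of W1 W2]) (auto simp: S_def)
qed

lemma symmetric_zero_nhds:
  assumes "topological_group X" "openin X V" "0 \<in> V"
  obtains W where "openin X W" "0 \<in> W" "symmetric_set W" "W \<subseteq> V"
proof
  have "{x. - x \<in> V} = uminus ` V"
    by (auto simp: image_iff) (metis minus_minus)
  then show "openin X (V \<inter> uminus ` V)"
    using openin_group_preimage[OF assms(1) continuous_map_group_uminus[OF assms(1)] assms(2)]
    by (metis assms(2) openin_Int)
  show "symmetric_set (V \<inter> uminus ` V)"
    unfolding symmetric_set_def by (auto simp: image_iff) (metis minus_minus)
  show "0 \<in> V \<inter> uminus ` V"
    using assms(3) by (metis IntI image_eqI minus_zero)
qed auto

lemma symmetric_zero_nhds_set_power:
  assumes "topological_group X" "openin X V" "0 \<in> V"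
  shows "\<exists>W. openin X W \<and> 0 \<in> W \<and> symmetric_set W \<and> set_power W m \<subseteq> V"
  using assms(2,3)
proof (induction m arbitrary: V)
  case 0
  then show ?case
    using symmetric_zero_nhds[OF assms(1)] by (metis set_power.simps(1) singleton_iff subsetI)
next
  case (Suc m)
  obtain W1 W2 where W: "openin X W1" "openin X W2" "0 \<in> W1" "0 \<in> W2"
    "\<And>x y. x \<in> W1 \<Longrightarrow> y \<in> W2 \<Longrightarrow> x + y \<in> V"
    using zero_nhds_split[OF assms(1) Suc.prems] by blast
  obtain W' where W': "openin X W'" "0 \<in> W'" "set_power W' m \<subseteq> W2"
    using Suc.IH[OF W(2,4)] by blast
  have "0 \<in> W1 \<inter> W'"
    using W(3) W'(2) by blast
  then obtain W where "openin X W" "0 \<in> W" "symmetric_set W" "W \<subseteq> W1 \<inter> W'"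
    using symmetric_zero_nhds[OF assms(1) openin_Int[OF W(1) W'(1)]] by blast
  moreover have "set_power W (Suc m) \<subseteq> V"
  proof
    fix z assume "z \<in> set_power W (Suc m)"
    then obtain a b where "z = a + b" "a \<in> W" "b \<in> set_power W m"
      by auto
    moreover have "a \<in> W1" "b \<in> W2"
      using calculation set_power_mono[of W W' m] W'(3) \<open>W \<subseteq> W1 \<inter> W'\<close> by auto
    ultimately show "z \<in> V"
      using W(5) by blast
  qed
  ultimately show ?case
    by blast
qed

lemma openin_if_zero_nhds:
  assumes "topological_group X" "topological_group Y"
    and zero: "\<And>V. openin X V \<Longrightarrow> 0 \<in> V \<Longrightarrow> \<exists>W. openin Y W \<and> 0 \<in> W \<and> W \<subseteq> V"
    and "openin X U"
  shows "openin Y U"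
  unfolding openin_subopen[of Y U]
proof
  fix x assume "x \<in> U"
  have "openin X ((\<lambda>y. - x + y) ` U)" "0 \<in> (\<lambda>y. - x + y) ` U"
    using openin_translate_left[OF assms(1,4)] \<open>x \<in> U\<close> by (force, force)
  then obtain W where W: "openin Y W" "0 \<in> W" "W \<subseteq> (\<lambda>y. - x + y) ` U"
    using zero by blast
  then have "(\<lambda>y. x + y) ` W \<subseteq> U"
    using image_mono[OF W(3), of "\<lambda>y. x + y"] by (simp add: translate_left_cancel)
  moreover have "x \<in> (\<lambda>y. x + y) ` W"
    using W(2) by (metis add.right_neutral image_eqI)
  ultimately show "\<exists>V. openin Y V \<and> x \<in> V \<and> V \<subseteq> U"
    using openin_translate_left[OF assms(2) W(1)] by blast
qed

lemma metric_nbhd_set_power_subset: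
  assumes right_invariant: "\<And>x y g. d (x + g) (y + g) = d x y"
    and ball: "\<And>x. d x 0 < e \<Longrightarrow> x \<in> W"
  shows "metric_nbhd d (set_power W k) e \<subseteq> set_power W (Suc k)"
proof
  fix g assume "g \<in> metric_nbhd d (set_power W k) e"
  then obtain a where a: "a \<in> set_power W k" "d g a < e"
    unfolding metric_nbhd_def by (subst (asm) INF_less_iff) auto
  have "d (g - a) 0 = d (g - a + a) (0 + a)"
    by (rule right_invariant[symmetric])
  then have "d (g - a) 0 = d g a"
    by simp
  then have "g - a \<in> W"
    using a(2) ball by simp
  moreover have "g = (g - a) + a"
    by simp
  ultimately show "g \<in> set_power W (Suc k)"
    using a(1) by (simp only: set_power.simps mem_Collect_eq) blast
qed

lemma topometric_group_topological_group: "topometric_group X d \<Longrightarrow> topological_group X"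
  by (simp add: topometric_group_def)

lemma topometric_group_right_invariant: "topometric_group X d \<Longrightarrow> d (x + g) (y + g) = d x y"
  by (simp add: topometric_group_def)

lemma topometric_group_zero_nhds_contains_ball:
  assumes "topometric_group X d" "openin X W" "0 \<in> W"
  obtains e where "e > 0" "\<And>x. d x 0 < e \<Longrightarrow> x \<in> W"
proof -
  interpret Metric_space UNIV d
    using assms(1) by (simp add: topometric_group_def)
  have "openin mtopology W"
    using assms by (simp add: topometric_group_def)
  then obtain e where e: "e > 0" "mball 0 e \<subseteq> W"
    using assms(3) openin_mtopology by blast
  show thesis
  proof (rule that[OF e(1)])
    fix x assume "d x 0 < e"
    then show "x \<in> W"
      using e(2) commute[of x 0] by auto
  qed
qed

lemma dense_translates_cover:
  assumes "topological_group X" "X closure_of D = topspace X" "openin X W" "0 \<in> W"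
  obtains c where "c \<in> D" "g \<in> (\<lambda>y. c + y) ` W"
proof -
  have "continuous_map X X (\<lambda>c. - c + g)"
    using continuous_map_compose[OF continuous_map_group_uminus[OF assms(1)]
        continuous_map_add_right[OF assms(1)]] by (simp add: o_def)
  then have "openin X {c. - c + g \<in> W}"
    using openin_group_preimage[OF assms(1) _ assms(3)] by blast
  moreover have "g \<in> {c. - c + g \<in> W}"
    using assms(4) by simp
  ultimately obtain c where "c \<in> D" "- c + g \<in> W"
    using assms(2) unfolding dense_intersects_open by blast
  moreover have "g = c + (- c + g)"
    by (simp add: add.assoc[symmetric])
  ultimately show thesis
    using that by blast
qed

lemma separable_zero_nhds_sigma_syndetic:
  assumes "topological_group X" "separable_space X" "openin X W" "0 \<in> W"
  shows "sigma_syndetic W"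
proof -
  obtain C where C: "countable C" "X closure_of C = topspace X"
    using assms(2) unfolding separable_space_def by blast
  have "g \<in> (\<Union>c\<in>C. (\<lambda>a. c + a) ` W)" for g
    using dense_translates_cover[OF assms(1) C(2) assms(3,4)] by blast
  then show ?thesis
    using C(1) unfolding sigma_syndetic_def by blast
qed

lemma steinhaus_openin_coarser:
  assumes "topometric_group T d" "topometric_group T' d" "steinhaus_property T d"
    and "separable_space T'" "openin T' U"
  shows "openin T U"
proof (rule openin_if_zero_nhds[OF _ _ _ assms(5)])
  show tg': "topological_group T'" and "topological_group T"
    using assms(1,2) by (simp_all add: topometric_group_topological_group)
  obtain k where k: "\<And>A e. symmetric_set A \<Longrightarrow> sigma_syndetic A \<Longrightarrow> e > 0 \<Longrightarrow>
      0 \<in> T interior_of (metric_nbhd d (set_power A k) e)"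
    using assms(3) unfolding steinhaus_property_def by blast
  fix V assume "openin T' V" "0 \<in> V"
  then obtain W where W: "openin T' W" "0 \<in> W" "symmetric_set W" "set_power W (Suc k) \<subseteq> V"
    using symmetric_zero_nhds_set_power[OF tg'] by blast
  obtain e where e: "e > 0" "\<And>x. d x 0 < e \<Longrightarrow> x \<in> W"
    using topometric_group_zero_nhds_contains_ball[OF assms(2) W(1,2)] by blast
  have "0 \<in> T interior_of (metric_nbhd d (set_power W k) e)"
    using k[OF W(3) separable_zero_nhds_sigma_syndetic[OF tg' assms(4) W(1,2)] e(1)] .
  moreover have "metric_nbhd d (set_power W k) e \<subseteq> set_power W (Suc k)"
    using topometric_group_right_invariant[OF assms(1)] e(2) by (rule metric_nbhd_set_power_subset)
  then have "T interior_of (metric_nbhd d (set_power W k) e) \<subseteq> V"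
    using interior_of_subset W(4) by (metis subset_trans)
  ultimately show "\<exists>W. openin T W \<and> 0 \<in> W \<and> W \<subseteq> V"
    using openin_interior_of by blast
qed

lemma exists_nat_two_div_less:
  assumes "r > 0"
  obtains m :: nat where "2 / (real m + 1) < r" "k \<le> m"
proof -
  obtain m0 :: nat where "2 / r < real m0"
    using reals_Archimedean2 by blast
  then have "2 < r * real m0"
    using assms by (simp add: divide_less_eq mult.commute)
  also have "\<dots> \<le> r * (real (max m0 k) + 1)"
    using assms by (intro mult_left_mono) auto
  finally have "2 / (real (max m0 k) + 1) < r"
    by (simp add: divide_less_eq mult.commute)
  then show thesis
    using that by simp
qed

primrec stem :: "(nat \<Rightarrow> nat) \<Rightarrow> nat \<Rightarrow> nat list" where
  "stem b 0 = []"
| "stem b (Suc n) = b n # stem b n"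

lemma length_stem [simp]: "length (stem b n) = n"
  by (induction n) auto

locale coarser_group_topology = Metric_space UNIV rho
  for rho :: "'a::group_add \<Rightarrow> 'a \<Rightarrow> real" +
  fixes T T' :: "'a topology" and Q :: "nat \<Rightarrow> 'a"
  assumes topological_group: "topological_group T"
    and topological_group': "topological_group T'"
    and coarser: "\<And>U. openin T' U \<Longrightarrow> openin T U"
    and complete: "mcomplete"
    and mtopology_eq: "mtopology = T"
    and dense_range: "T closure_of range Q = topspace T"
    and completely_metrizable': "completely_metrizable_space T'"
begin

lemma topspace_eq: "topspace T = UNIV" "topspace T' = UNIV"
  using topological_group topological_group' by (simp_all add: topological_group_topspace)

lemma closure_of_superset': "S \<subseteq> T' closure_of S"
  by (simp add: closure_of_subset topspace_eq)

definition int_cl :: "'a set \<Rightarrow> 'a set" where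
  "int_cl V = T' interior_of (T' closure_of V)"

lemma openin_int_cl: "openin T' (int_cl V)"
  by (simp add: int_cl_def)

lemma int_cl_subset_closure: "int_cl V \<subseteq> T' closure_of V"
  unfolding int_cl_def by (rule interior_of_subset)

lemma int_cl_translate: "int_cl ((\<lambda>y. a + y) ` V) = (\<lambda>y. a + y) ` int_cl V"
  by (simp add: int_cl_def closure_of_translate_left[OF topological_group']
      interior_of_translate_left[OF topological_group'])

lemma dense_range_meets: "openin T S \<Longrightarrow> x \<in> S \<Longrightarrow> \<exists>n. Q n \<in> S"
  using dense_range unfolding dense_intersects_open by blast

lemma int_cl_nonempty:
  assumes "openin T B" "0 \<in> B"
  shows "int_cl B \<noteq> {}"
proof
  assume empty: "int_cl B = {}"
  have "T' interior_of \<Union>(range (\<lambda>n. T' closure_of ((\<lambda>y. Q n + y) ` B))) = {}"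
  proof (rule Baire_category_alt)
    fix S assume "S \<in> range (\<lambda>n. T' closure_of ((\<lambda>y. Q n + y) ` B))"
    then obtain n where S: "S = T' closure_of ((\<lambda>y. Q n + y) ` B)"
      by blast
    have "T' interior_of S = {}"
      using empty by (simp add: S int_cl_def interior_of_translate_left[OF topological_group']
          closure_of_translate_left[OF topological_group'])
    then show "closedin T' S \<and> T' interior_of S = {}"
      by (simp add: S)
  qed (use completely_metrizable' in auto)
  moreover have "\<Union>(range (\<lambda>n. T' closure_of ((\<lambda>y. Q n + y) ` B))) = UNIV"
  proof -
    have "g \<in> \<Union>(range (\<lambda>n. T' closure_of ((\<lambda>y. Q n + y) ` B)))" for g
    proof -
      obtain c where "c \<in> range Q" "g \<in> (\<lambda>y. c + y) ` B"
        using dense_translates_cover[OF topological_group dense_range assms] .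
      then obtain n where "g \<in> (\<lambda>y. Q n + y) ` B"
        by blast
      then have "g \<in> T' closure_of ((\<lambda>y. Q n + y) ` B)"
        using closure_of_superset'[of "(\<lambda>y. Q n + y) ` B"] by blast
      then show ?thesis
        by blast
    qed
    then show ?thesis
      by blast
  qed
  ultimately show False
    using interior_of_topspace[of T'] by (simp add: topspace_eq)
qed

lemma zero_in_int_cl:
  assumes "openin T V" "0 \<in> V"
  shows "0 \<in> int_cl V"
proof -
  obtain B where B: "openin T B" "0 \<in> B" "symmetric_set B" "set_power B 2 \<subseteq> V"
    using symmetric_zero_nhds_set_power[OF topological_group assms] by blast
  obtain w where w: "w \<in> int_cl B"
    using int_cl_nonempty[OF B(1,2)] by blast
  have "(\<lambda>y. - w + y) ` int_cl B \<subseteq> T' closure_of V"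
  proof
    fix z assume "z \<in> (\<lambda>y. - w + y) ` int_cl B"
    then obtain w' where w': "w' \<in> int_cl B" "z = - w + w'"
      by blast
    have "(w, w') \<in> prod_topology T' T' closure_of (B \<times> B)"
      using w w'(1) int_cl_subset_closure by (auto simp: closure_of_Times)
    then have "z \<in> T' closure_of ((\<lambda>(x, y). - x + y) ` (B \<times> B))"
      using continuous_map_image_closure_subset[OF continuous_map_group_diff[OF topological_group']]
        w'(2) by fastforce
    moreover have "- x + y \<in> V" if "x \<in> B" "y \<in> B" for x y
      using add_in_set_power_2[OF symmetric_set_uminus[OF B(3) that(1)] that(2)] B(4) by blast
    then have "(\<lambda>(x, y). - x + y) ` (B \<times> B) \<subseteq> V"
      by auto
    ultimately show "z \<in> T' closure_of V"
      using closure_of_mono by blast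
  qed
  then have "(\<lambda>y. - w + y) ` int_cl B \<subseteq> int_cl V"
    using openin_translate_left[OF topological_group' openin_int_cl]
    unfolding int_cl_def by (rule interior_of_maximal)
  moreover have "0 \<in> (\<lambda>y. - w + y) ` int_cl B"
    using w by (metis image_eqI left_minus)
  ultimately show ?thesis
    by blast
qed

lemma open_subset_int_cl:
  assumes "openin T V"
  shows "V \<subseteq> int_cl V"
proof
  fix v assume "v \<in> V"
  then have "0 \<in> int_cl ((\<lambda>y. - v + y) ` V)"
    using zero_in_int_cl openin_translate_left[OF topological_group assms] by (metis image_eqI left_minus)
  then have "v + 0 \<in> (\<lambda>y. v + y) ` int_cl ((\<lambda>y. - v + y) ` V)"
    by blast
  then show "v \<in> int_cl V"
    by (simp add: int_cl_translate[symmetric] translate_left_cancel)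
qed

text \<open>
  The scheme is indexed by finite sequences, newest index first. The shadows are T'-open, pairwise disjoint among siblings, and approximate
  int cl of the cells, so a point in every level picks out a unique branch of cells.
\<close>

definition center :: "nat \<Rightarrow> 'a" where
  "center j = Q (fst (prod_decode j))"

definition radius :: "nat \<Rightarrow> real" where
  "radius j = 1 / (real (snd (prod_decode j)) + 1)"

definition admissible :: "'a set \<Rightarrow> nat \<Rightarrow> nat \<Rightarrow> bool" where
  "admissible S n j \<longleftrightarrow> mcball (center j) (radius j) \<subseteq> S \<and> radius j \<le> 1 / (real n + 1)"

primrec cell :: "'a set \<Rightarrow> nat list \<Rightarrow> 'a set" where
  "cell A [] = A"
| "cell A (j # js) =
     (if admissible (cell A js) (length js) j then mball (center j) (radius j) else {})"

primrec shadow :: "'a set \<Rightarrow> nat list \<Rightarrow> 'a set" where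
  "shadow A [] = int_cl A"
| "shadow A (j # js) =
     shadow A js \<inter> int_cl (cell A (j # js)) - T' closure_of (\<Union>i<j. int_cl (cell A (i # js)))"

lemma openin_cell: "openin T A \<Longrightarrow> openin T (cell A js)"
  by (induction js) (auto simp: mtopology_eq[symmetric])

lemma openin_shadow: "openin T' (shadow A js)"
  by (induction js) (auto simp: openin_int_cl intro!: openin_diff openin_Int)

lemma shadow_Cons_subset: "shadow A (j # js) \<subseteq> shadow A js"
  by auto

lemma shadow_subset_int_cl: "shadow A js \<subseteq> int_cl (cell A js)"
  by (cases js) auto

lemma shadow_siblings_disjoint:
  assumes "i < j"
  shows "shadow A (i # js) \<inter> shadow A (j # js) = {}"
proof -
  have "shadow A (i # js) \<subseteq> int_cl (cell A (i # js))"
    by (rule shadow_subset_int_cl)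
  also have "\<dots> \<subseteq> (\<Union>i<j. int_cl (cell A (i # js)))"
    using assms by blast
  also have "\<dots> \<subseteq> T' closure_of (\<Union>i<j. int_cl (cell A (i # js)))"
    by (rule closure_of_superset')
  finally show ?thesis
    by auto
qed

lemma shadow_unique:
  "length js = length ks \<Longrightarrow> y \<in> shadow A js \<Longrightarrow> y \<in> shadow A ks \<Longrightarrow> js = ks"
proof (induction js arbitrary: ks)
  case Nil
  then show ?case by simp
next
  case (Cons j js)
  then obtain k ks' where ks: "ks = k # ks'"
    by (cases ks) auto
  have "js = ks'"
    using Cons.IH[of ks'] Cons.prems shadow_Cons_subset ks by auto
  moreover have "\<not> j < k" "\<not> k < j"
    using shadow_siblings_disjoint[of j k A js] shadow_siblings_disjoint[of k j A js]
      Cons.prems ks \<open>js = ks'\<close> by auto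
  ultimately show ?case
    using ks by simp
qed

lemma cell_has_child:
  assumes "openin T A" "p \<in> cell A js"
  obtains j where "p \<in> cell A (j # js)"
proof -
  obtain r where r: "r > 0" "mball p r \<subseteq> cell A js"
    using openin_cell[OF assms(1), of js] assms(2) openin_mtopology mtopology_eq by blast
  obtain m :: nat where m: "2 / (real m + 1) < r" "length js \<le> m"
    using exists_nat_two_div_less[OF r(1)] by blast
  obtain i where i: "Q i \<in> mball p (1 / (real m + 1))"
    using dense_range_meets[of "mball p (1 / (real m + 1))" p] mtopology_eq by auto
  define j where "j = prod_encode (i, m)"
  have j: "center j = Q i" "radius j = 1 / (real m + 1)"
    by (simp_all add: j_def center_def radius_def)
  have "mcball (Q i) (1 / (real m + 1)) \<subseteq> mball p r"
  proof
    fix z assume "z \<in> mcball (Q i) (1 / (real m + 1))"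
    then have "rho p z < 1 / (real m + 1) + 1 / (real m + 1)"
      using triangle[of p "Q i" z] i by simp
    then have "rho p z < 2 / (real m + 1)"
      by (simp add: add_divide_distrib[symmetric])
    then show "z \<in> mball p r"
      using m(1) by simp
  qed
  moreover have "1 / (real m + 1) \<le> 1 / (real (length js) + 1)"
    using m(2) by (simp add: frac_le)
  ultimately have "admissible (cell A js) (length js) j"
    using r(2) j unfolding admissible_def by auto
  moreover have "p \<in> mball (Q i) (1 / (real m + 1))"
    using i by (simp add: commute)
  ultimately show thesis
    using that[of j] j by simp
qed

lemma shadow_subset_closure_children:
  assumes "openin T A"
  shows "shadow A js \<subseteq> T' closure_of (\<Union>j. shadow A (j # js))"
proof (intro subsetI, unfold in_closure_of, intro conjI allI impI)
  fix y N assume "y \<in> shadow A js" and N: "y \<in> N \<and> openin T' N"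
  define W where "W = N \<inter> shadow A js"
  have W: "openin T' W" "y \<in> W"
    using N \<open>y \<in> shadow A js\<close> openin_shadow[of A js] by (auto simp: W_def)
  have "W \<inter> T' closure_of (cell A js) \<noteq> {}"
    using W(2) shadow_subset_int_cl[of A js] int_cl_subset_closure unfolding W_def by blast
  then obtain p where p: "p \<in> W" "p \<in> cell A js"
    using openin_Int_closure_of_eq_empty[OF W(1)] by blast
  obtain j where "p \<in> cell A (j # js)"
    using cell_has_child[OF assms p(2)] by blast
  then have "\<exists>j. W \<inter> int_cl (cell A (j # js)) \<noteq> {}"
    using p(1) open_subset_int_cl[OF openin_cell[OF assms]] by blast
  \<comment> \<open>the first child whose int cl meets W is not cut off by its elder siblings\<close>
  define j0 where "j0 = (LEAST j. W \<inter> int_cl (cell A (j # js)) \<noteq> {})"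
  obtain z where z: "z \<in> W" "z \<in> int_cl (cell A (j0 # js))"
    using LeastI_ex[OF \<open>\<exists>j. _\<close>] unfolding j0_def by blast
  have "W \<inter> (\<Union>i<j0. int_cl (cell A (i # js))) = {}"
    using not_less_Least unfolding j0_def by blast
  then have "W \<inter> T' closure_of (\<Union>i<j0. int_cl (cell A (i # js))) = {}"
    using openin_Int_closure_of_eq_empty[OF W(1)] by simp
  then have "z \<in> shadow A (j0 # js)"
    using z unfolding W_def by auto
  then show "\<exists>z. z \<in> (\<Union>j. shadow A (j # js)) \<and> z \<in> N"
    using z(1) unfolding W_def by blast
qed (simp add: topspace_eq)

definition level :: "'a set \<Rightarrow> nat \<Rightarrow> 'a set" where
  "level A n = \<Union>(shadow A ` {js. length js = n})"

lemma openin_level: "openin T' (level A n)"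
  unfolding level_def by (rule openin_Union) (auto simp: openin_shadow)

lemma level_0: "level A 0 = int_cl A"
  by (simp add: level_def)

lemma level_subset_closure_Suc:
  assumes "openin T A"
  shows "level A n \<subseteq> T' closure_of (level A (Suc n))"
proof
  fix y assume "y \<in> level A n"
  then obtain js where js: "length js = n" "y \<in> shadow A js"
    by (auto simp: level_def)
  have "shadow A (j # js) \<subseteq> level A (Suc n)" for j
    unfolding level_def using js(1) by (intro Union_upper) (simp add: image_iff exI[of _ "j # js"])
  then have "(\<Union>j. shadow A (j # js)) \<subseteq> level A (Suc n)"
    by blast
  then have "T' closure_of (\<Union>j. shadow A (j # js)) \<subseteq> T' closure_of (level A (Suc n))"
    by (rule closure_of_mono)
  then show "y \<in> T' closure_of (level A (Suc n))"
    using shadow_subset_closure_children[OF assms, of js] js(2) by blast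
qed

lemma int_cl_subset_closure_level:
  assumes "openin T A"
  shows "int_cl A \<subseteq> T' closure_of (level A n)"
proof (induction n)
  case 0
  then show ?case
    unfolding level_0 by (rule closure_of_superset')
next
  case (Suc n)
  have "T' closure_of (level A n) \<subseteq> T' closure_of (level A (Suc n))"
    by (rule closure_of_minimal[OF level_subset_closure_Suc[OF assms] closedin_closure_of])
  then show ?case
    using Suc by blast
qed

lemma level_branch:
  assumes "\<And>n. y \<in> level A n"
  obtains b where "\<And>n. y \<in> shadow A (stem b n)"
proof -
  have "\<forall>n. \<exists>js. length js = n \<and> y \<in> shadow A js"
    using assms by (auto simp: level_def)
  then obtain L where L: "\<And>n. length (L n) = n" "\<And>n. y \<in> shadow A (L n)"
    by metis
  have L_Suc: "L (Suc n) = hd (L (Suc n)) # L n" for n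
  proof -
    obtain j ks where jks: "L (Suc n) = j # ks"
      using L(1)[of "Suc n"] by (cases "L (Suc n)") auto
    then have "y \<in> shadow A ks" "length ks = n"
      using L[of "Suc n"] shadow_Cons_subset by auto
    then have "ks = L n"
      using shadow_unique L[of n] by metis
    then show ?thesis
      using jks by simp
  qed
  have "stem (\<lambda>n. hd (L (Suc n))) n = L n" for n
  proof (induction n)
    case 0
    then show ?case using L(1)[of 0] by simp
  next
    case (Suc n)
    then show ?case using L_Suc[of n] by simp
  qed
  then show thesis
    using that L(2) by metis
qed

lemma branch_limit:
  assumes A: "openin T A" and y: "\<And>n. y \<in> shadow A (stem b n)"
  obtains p where "\<And>n. p \<in> cell A (stem b n)"
    and "\<And>e. e > 0 \<Longrightarrow> \<exists>n. cell A (stem b n) \<subseteq> mball p e"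
proof -
  define c where "c n = center (b n)" for n
  define r where "r n = radius (b n)" for n
  have nonempty: "cell A (stem b n) \<noteq> {}" for n
    using y[of n] shadow_subset_int_cl int_cl_subset_closure by fastforce
  have adm: "admissible (cell A (stem b n)) n (b n)" for n
    using nonempty[of "Suc n"] by (auto split: if_splits)
  then have cell_Suc: "cell A (stem b (Suc n)) = mball (c n) (r n)" for n
    by (simp add: c_def r_def)
  have r: "0 < r n" "r n \<le> 1 / (real n + 1)" for n
    using adm[of n] by (simp_all add: r_def radius_def admissible_def)
  have mcball_subset: "mcball (c n) (r n) \<subseteq> cell A (stem b n)" for n
    using adm[of n] by (simp add: c_def r_def admissible_def)
  have dec: "decseq (\<lambda>n. mcball (c n) (r n))"
  proof (rule decseq_SucI)
    fix n
    have "mcball (c (Suc n)) (r (Suc n)) \<subseteq> mball (c n) (r n)"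
      using mcball_subset[of "Suc n"] unfolding cell_Suc .
    then show "mcball (c (Suc n)) (r (Suc n)) \<subseteq> mcball (c n) (r n)"
      using mball_subset_mcball by blast
  qed
  have small: "\<forall>e>0. \<exists>n a. mcball (c n) (r n) \<subseteq> mcball a e"
  proof (intro allI impI)
    fix e :: real assume "e > 0"
    then obtain n :: nat where "2 / (real n + 1) < e"
      using exists_nat_two_div_less by blast
    then have "r n \<le> e"
      using r(2)[of n] divide_right_mono[of 1 2 "real n + 1"] by linarith
    then show "\<exists>n a. mcball (c n) (r n) \<subseteq> mcball a e"
      using mcball_subset_concentric by blast
  qed
  have "(\<forall>n. closedin mtopology (mcball (c n) (r n))) \<and> (\<forall>n. mcball (c n) (r n) \<noteq> {}) \<and>
      decseq (\<lambda>n. mcball (c n) (r n)) \<and> (\<forall>e>0. \<exists>n a. mcball (c n) (r n) \<subseteq> mcball a e)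
      \<longrightarrow> \<Inter>(range (\<lambda>n. mcball (c n) (r n))) \<noteq> {}"
    using complete unfolding mcomplete_nest by (rule spec)
  moreover have "mcball (c n) (r n) \<noteq> {}" for n
    using r(1)[of n] centre_in_mcball_iff[of "c n" "r n"] by force
  ultimately have "\<Inter>(range (\<lambda>n. mcball (c n) (r n))) \<noteq> {}"
    using dec small by blast
  then obtain p where p: "\<And>n. p \<in> mcball (c n) (r n)"
    by blast
  show thesis
  proof (rule that)
    show "p \<in> cell A (stem b n)" for n
      using p mcball_subset by blast
    fix e :: real assume "e > 0"
    then obtain n :: nat where n: "2 / (real n + 1) < e"
      using exists_nat_two_div_less by blast
    have "mball (c n) (r n) \<subseteq> mball p e"
    proof
      fix z assume "z \<in> mball (c n) (r n)"
      then have "rho p z < r n + r n"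
        using p[of n] triangle[of p "c n" z] by (simp add: commute)
      also have "\<dots> \<le> 2 / (real n + 1)"
        using r(2)[of n] by (simp add: add_divide_distrib[symmetric])
      finally show "z \<in> mball p e"
        using n by simp
    qed
    then show "\<exists>n. cell A (stem b n) \<subseteq> mball p e"
      using cell_Suc by metis
  qed
qed

lemma Inter_levels_subset:
  assumes A: "openin T A" and y: "\<And>n. y \<in> level A n"
  shows "y \<in> A"
proof -
  obtain b where b: "\<And>n. y \<in> shadow A (stem b n)"
    using level_branch[OF y] by blast
  obtain p where p: "\<And>n. p \<in> cell A (stem b n)"
    and shrink: "\<And>e. e > 0 \<Longrightarrow> \<exists>n. cell A (stem b n) \<subseteq> mball p e"
    using branch_limit[OF A b] by blast
  have "y = p"
  proof (rule ccontr)
    assume "y \<noteq> p"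
    have "Hausdorff_space T'"
      using completely_metrizable' completely_metrizable_imp_metrizable_space
        metrizable_imp_Hausdorff_space by blast
    then have "\<exists>U V. openin T' U \<and> openin T' V \<and> p \<in> U \<and> y \<in> V \<and> disjnt U V"
      using \<open>y \<noteq> p\<close> unfolding Hausdorff_space_def topspace_eq by auto
    then obtain U V where UV: "openin T' U" "openin T' V" "p \<in> U" "y \<in> V" "disjnt U V"
      by blast
    obtain e where "e > 0" "mball p e \<subseteq> U"
      using coarser[OF UV(1)] UV(3) openin_mtopology mtopology_eq by blast
    then obtain n where "cell A (stem b n) \<subseteq> U"
      using shrink by blast
    then have "y \<in> T' closure_of U"
      using b[of n] shadow_subset_int_cl int_cl_subset_closure closure_of_mono by blast
    then show False
      using UV(2,4,5) openin_Int_closure_of_eq_empty[OF UV(2)] by (auto simp: disjnt_def)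
  qed
  then show ?thesis
    using p[of 0] by simp
qed

lemma int_cl_subset_differences:
  assumes A: "openin T A" "0 \<in> A" and g: "g \<in> int_cl A"
  obtains a b where "a \<in> A" "b \<in> A" "g = a + - b"
proof -
  define G where "G n = level A n \<union> (UNIV - T' closure_of (int_cl A))" for n
  have G: "openin T' (G n) \<and> T' closure_of (G n) = UNIV" for n
  proof
    show "openin T' (G n)"
      unfolding G_def using openin_diff[OF openin_topspace closedin_closure_of, of T']
      by (simp add: topspace_eq openin_Un openin_level)
    have "T' closure_of (int_cl A) \<subseteq> T' closure_of (level A n)"
      by (rule closure_of_minimal[OF int_cl_subset_closure_level[OF A(1)] closedin_closure_of])
    then show "T' closure_of (G n) = UNIV"
      unfolding G_def closure_of_Un using closure_of_superset'[of "UNIV - T' closure_of (int_cl A)"]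
      by blast
  qed
  have in_A: "z \<in> A" if "z \<in> int_cl A" "\<And>n. z \<in> G n" for z
  proof (rule Inter_levels_subset[OF A(1)])
    show "z \<in> level A n" for n
      using that closure_of_superset'[of "int_cl A"] unfolding G_def by blast
  qed
  define \<G> where "\<G> = range G \<union> range (\<lambda>n. (\<lambda>x. g + x) ` G n)"
  have "T' closure_of \<Inter>\<G> = topspace T'"
  proof (rule Baire_category)
    fix S assume "S \<in> \<G>"
    then show "openin T' S \<and> T' closure_of S = topspace T'"
      unfolding \<G>_def using G openin_translate_left[OF topological_group']
      by (auto simp: topspace_eq closure_of_translate_left[OF topological_group'])
  qed (use completely_metrizable' \<G>_def in auto)
  moreover have "openin T' (int_cl A \<inter> (\<lambda>x. g + x) ` int_cl A)"
    using openin_int_cl openin_translate_left[OF topological_group' openin_int_cl] by (rule openin_Int)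
  moreover have "g \<in> int_cl A \<inter> (\<lambda>x. g + x) ` int_cl A"
    using g zero_in_int_cl[OF A] by (metis IntI add.right_neutral image_eqI)
  ultimately obtain z where z: "z \<in> \<Inter>\<G>" "z \<in> int_cl A" "z \<in> (\<lambda>x. g + x) ` int_cl A"
    unfolding dense_intersects_open by blast
  then obtain z' where z': "z' \<in> int_cl A" "z = g + z'"
    by blast
  have "G n \<in> \<G>" "(\<lambda>x. g + x) ` G n \<in> \<G>" for n
    unfolding \<G>_def by blast+
  then have "z \<in> G n" "g + z' \<in> (\<lambda>x. g + x) ` G n" for n
    using z(1) z'(2) by blast+
  then have "z \<in> A" "z' \<in> A"
    using in_A z(2) z'(1) by (auto simp: inj_image_mem_iff)
  moreover have "g = z + - z'"
    using z'(2) by (simp add: add.assoc)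
  ultimately show thesis
    using that by blast
qed

lemma openin_coarser: "openin T U \<Longrightarrow> openin T' U"
proof (rule openin_if_zero_nhds[OF topological_group topological_group'])
  fix V assume "openin T V" "0 \<in> V"
  then obtain A where A: "openin T A" "0 \<in> A" "symmetric_set A" "set_power A 2 \<subseteq> V"
    using symmetric_zero_nhds_set_power[OF topological_group] by blast
  have "int_cl A \<subseteq> V"
  proof
    fix g assume "g \<in> int_cl A"
    then obtain a b where "a \<in> A" "b \<in> A" "g = a + - b"
      using int_cl_subset_differences[OF A(1,2)] by blast
    moreover have "- b \<in> A"
      using symmetric_set_uminus[OF A(3) \<open>b \<in> A\<close>] .
    ultimately show "g \<in> V"
      using add_in_set_power_2 A(4) by blast
  qed
  then show "\<exists>W. openin T' W \<and> 0 \<in> W \<and> W \<subseteq> V"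
    using openin_int_cl zero_in_int_cl[OF A(1,2)] by blast
qed

end

lemma polish_group_topology_eq_coarser:
  assumes "topological_group T" "topological_group T'"
    and "polish_topology T" "completely_metrizable_space T'"
    and coarser: "\<And>U. openin T' U \<Longrightarrow> openin T U"
  shows "T = T'"
proof -
  obtain M rho where M: "Metric_space M rho" "Metric_space.mcomplete M rho"
      "Metric_space.mtopology M rho = T"
    using assms(3) unfolding polish_topology_def completely_metrizable_space_def by metis
  have "M = UNIV"
    using Metric_space.topspace_mtopology[OF M(1)] M(3) topological_group_topspace[OF assms(1)] by simp
  obtain C where C: "countable C" "T closure_of C = topspace T"
    using assms(3) unfolding polish_topology_def separable_space_def by blast
  then have "C \<noteq> {}"
    using topological_group_topspace[OF assms(1)] by auto
  then have "range (from_nat_into C) = C"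
    using C(1) by (rule range_from_nat_into)
  then have "coarser_group_topology rho T T' (from_nat_into C)"
    unfolding coarser_group_topology_def coarser_group_topology_axioms_def
    using assms M C \<open>M = UNIV\<close> by simp
  then interpret coarser_group_topology rho T T' "from_nat_into C" .
  show ?thesis
    unfolding topology_eq using coarser openin_coarser by blast
qed

theorem corollary4p4:
  fixes T T' :: "('a::group_add) topology" and d :: "'a \<Rightarrow> 'a \<Rightarrow> real"
  assumes "polish_topometric_group T d"
    and "steinhaus_property T d"
    and "polish_topometric_group T' d"
  shows "T = T'"
proof (rule polish_group_topology_eq_coarser)
  show "topological_group T" "topological_group T'" "polish_topology T"
    using assms(1,3) unfolding polish_topometric_group_def
    by (blast intro: topometric_group_topological_group)+
  show "completely_metrizable_space T'"
    using assms(3) by (simp add: polish_topometric_group_def polish_topology_def)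
  show "openin T U" if "openin T' U" for U
    using steinhaus_openin_coarser[of T d T'] assms that
    by (simp add: polish_topometric_group_def polish_topology_def)
qed

end
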